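(* Let $r\ge2$ and let $\mathcal{P}$ be a set of $r$-patterns such that the family of all $\mathcal{P}$-cliques is reconstructible. Then there is a constant $C>0$ such that a.a.s. $z_{\mathcal{P}}(\mathbb{RM}_n^{(r)})\le C n^{1/r}$.
   Context: An ordered $r$-matching of size $k$ is a set of $k$ pairwise disjoint $r$-element subsets (edges) of a linearly ordered vertex set of size $rk$; $\mathbb{RM}^{(r)}_n$ is a uniformly random ordered $r$-matching on $[rn]$. An $r$-pattern is an ordered $r$-matching of size 2 (written as a word over $\{A,B\}$, each letter $r$ times). For a set $\mathcal P$ of $r$-patterns, a $\mathcal P$-clique is an ordered matching all of whose pairs of edges form patterns in $\mathcal P$ (i.e., induce matchings order-isomorphic to members of $\mathcal P$), and $z_{\mathcal P}(M)$ is the largest size of a $\mathcal P$-clique contained in $M$. The trace $\mathrm{tr}(M)$ of an ordered $r$-matching $M$ is the word over $[r]$ obtained by writing, at each vertex (in the vertex order), the number $i$ if that vertex is the $i$-th vertex (from the left) of its edge. A family $\mathcal F$ of ordered matchings is reconstructible if no two distinct members of $\mathcal F$ on the same ordered vertex set have the same trace. "A.a.s." means with probability tending to 1 as $n\to\infty$. *)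

theory Defs
  imports Complex_Main
begin

definition ordered_matching :: "nat \<Rightarrow> nat \<Rightarrow> nat set set \<Rightarrow> bool" where
  "ordered_matching r k M \<longleftrightarrow>
     (\<forall>e\<in>M. card e = r \<and> e \<subseteq> {0..<r*k}) \<and>
     (\<forall>e\<in>M. \<forall>f\<in>M. e \<noteq> f \<longrightarrow> e \<inter> f = {}) \<and>
     \<Union>M = {0..<r*k} \<and> finite M \<and> card M = k"

text \<open>All ordered r-matchings of size n; RM_n^(r) is uniform on this set.\<close>
definition matchings :: "nat \<Rightarrow> nat \<Rightarrow> nat set set set" where
  "matchings r n = {M. ordered_matching r n M}"

definition patterns :: "nat \<Rightarrow> nat set set set" where
  "patterns r = matchings r 2"

definition rank :: "nat set \<Rightarrow> nat \<Rightarrow> nat" where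
  "rank S x = card {y\<in>S. y < x}"

definition induced_pattern :: "nat set \<Rightarrow> nat set \<Rightarrow> nat set set" where
  "induced_pattern e f = {rank (e \<union> f) ` e, rank (e \<union> f) ` f}"

definition is_clique :: "nat set set set \<Rightarrow> nat set set \<Rightarrow> bool" where
  "is_clique P N \<longleftrightarrow> (\<forall>e\<in>N. \<forall>f\<in>N. e \<noteq> f \<longrightarrow> induced_pattern e f \<in> P)"

definition z :: "nat set set set \<Rightarrow> nat set set \<Rightarrow> nat" where
  "z P M = Max {card N | N. N \<subseteq> M \<and> is_clique P N}"

text \<open>Trace of an ordered r-matching on {0..<m}: at vertex v write i if v is the
  i-th vertex (from the left, 1-based) of its edge.\<close>
definition trace :: "nat \<Rightarrow> nat set set \<Rightarrow> nat list" where
  "trace m M = map (\<lambda>v. Suc (card {u \<in> (THE e. e \<in> M \<and> v \<in> e). u < v})) [0..<m]"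

definition clique_family_reconstructible :: "nat \<Rightarrow> nat set set set \<Rightarrow> bool" where
  "clique_family_reconstructible r P \<longleftrightarrow>
     (\<forall>k M1 M2. ordered_matching r k M1 \<and> is_clique P M1 \<and>
                ordered_matching r k M2 \<and> is_clique P M2 \<and>
                trace (r*k) M1 = trace (r*k) M2 \<longrightarrow> M1 = M2)"

definition prob_RM :: "nat \<Rightarrow> nat \<Rightarrow> (nat set set \<Rightarrow> bool) \<Rightarrow> real" where
  "prob_RM r n Q = real (card {M \<in> matchings r n. Q M}) / real (card (matchings r n))"

end

theory Submission
  imports Defs
begin

(* A first-moment argument. A P-clique with k edges inside a matching on [rn] is
   determined by its vertex set, an rk-subset of [rn], together with the trace of its
   order-preserving copy on [rk], because the family of P-cliques is reconstructible; so
   there are at most C(rn, rk) r^(rk) of them. Each extends to a perfect matching of the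
   remaining r(n - k) vertices in (r(n-k))! / (r!^(n-k) (n-k)!) ways, out of
   (rn)! / (r!^n n!) matchings in total. Hence P(z >= k) <= r^(rk) r!^k n^k / (rk)!,
   which by (rk)! >= (rk/e)^(rk) is at most (r! e^r n / k^r)^k <= 2^(-k) once
   k^r >= 2 r! e^r n, in particular for k > C n^(1/r) with C = 2 r! e^r. *)

definition partial_matchings :: "nat \<Rightarrow> nat set \<Rightarrow> nat set set set" where
  "partial_matchings r W =
     {N. (\<forall>e\<in>N. card e = r \<and> e \<subseteq> W) \<and> (\<forall>e\<in>N. \<forall>f\<in>N. e \<noteq> f \<longrightarrow> e \<inter> f = {})}"

definition perfect_matchings :: "nat \<Rightarrow> nat set \<Rightarrow> nat set set set" where
  "perfect_matchings r W = {M \<in> partial_matchings r W. \<Union>M = W}"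

lemma partial_matchings_mono: "N \<subseteq> M \<Longrightarrow> M \<in> partial_matchings r W \<Longrightarrow> N \<in> partial_matchings r W"
  unfolding partial_matchings_def by blast

lemma finite_partial_matchings: "finite W \<Longrightarrow> finite (partial_matchings r W)"
  by (rule finite_subset[of _ "Pow (Pow W)"]) (auto simp: partial_matchings_def)

lemma finite_perfect_matchings: "finite W \<Longrightarrow> finite (perfect_matchings r W)"
  by (simp add: perfect_matchings_def finite_partial_matchings)

lemma card_Union_partial_matching:
  assumes "finite W" "N \<in> partial_matchings r W"
  shows "card (\<Union>N) = r * card N"
proof -
  have "card (\<Union>N) = sum card N"
    using assms by (intro card_Union_disjoint)
      (auto simp: partial_matchings_def pairwise_def disjnt_def intro: finite_subset)
  then show ?thesis
    using assms(2) by (simp add: partial_matchings_def)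
qed

lemma matchings_eq_perfect_matchings:
  assumes "r > 0"
  shows "matchings r n = perfect_matchings r {0..<r*n}"
proof -
  have "card M = n" if "M \<in> perfect_matchings r {0..<r*n}" for M
    using card_Union_partial_matching[of "{0..<r*n}" M r] that assms
    by (simp add: perfect_matchings_def)
  moreover have "finite M" if "M \<in> perfect_matchings r {0..<r*n}" for M
    using that by (auto simp: perfect_matchings_def partial_matchings_def intro: finite_UnionD)
  ultimately show ?thesis
    by (auto simp: matchings_def ordered_matching_def perfect_matchings_def partial_matchings_def)
qed

lemma perfect_matchingsD:
  assumes "M \<in> perfect_matchings r W"
  shows "e \<in> M \<Longrightarrow> card e = r" "e \<in> M \<Longrightarrow> e \<subseteq> W" "\<Union>M = W"
    "e \<in> M \<Longrightarrow> f \<in> M \<Longrightarrow> e \<noteq> f \<Longrightarrow> e \<inter> f = {}"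
  using assms by (auto simp: perfect_matchings_def partial_matchings_def)

lemma perfect_matchings_Un:
  assumes M: "M \<in> perfect_matchings r A" and N: "N \<in> perfect_matchings r B" and "A \<inter> B = {}"
  shows "M \<union> N \<in> perfect_matchings r (A \<union> B)"
proof -
  have MN: "e \<inter> f = {}" if "e \<in> M" "f \<in> N" for e f
    using perfect_matchingsD(2)[OF M that(1)] perfect_matchingsD(2)[OF N that(2)] assms(3) by blast
  have "e \<inter> f = {}" if "e \<in> M \<union> N" "f \<in> M \<union> N" "e \<noteq> f" for e f
    using that MN MN[of f e] perfect_matchingsD(4)[OF M] perfect_matchingsD(4)[OF N]
    by (metis Int_commute Un_iff)
  then show ?thesis
    using perfect_matchingsD[OF M] perfect_matchingsD[OF N]
    unfolding perfect_matchings_def partial_matchings_def by auto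
qed

lemma perfect_matchings_Diff:
  assumes M: "M \<in> perfect_matchings r W" and "N \<subseteq> M"
  shows "M - N \<in> perfect_matchings r (W - \<Union>N)"
proof -
  have "f \<inter> e = {}" if "f \<in> M - N" "e \<in> N" for f e
    using that assms(2) perfect_matchingsD(4)[OF M] by (metis DiffE subsetD)
  then have "\<Union>(M - N) = W - \<Union>N"
    using perfect_matchingsD(3)[OF M] assms(2) by blast
  then show ?thesis
    using perfect_matchingsD[OF M] \<open>\<Union>(M - N) = W - \<Union>N\<close>
    unfolding perfect_matchings_def partial_matchings_def by auto
qed

lemma singleton_perfect_matching: "card e = r \<Longrightarrow> {e} \<in> perfect_matchings r e"
  by (simp add: perfect_matchings_def partial_matchings_def)

definition edges_containing :: "nat \<Rightarrow> nat set \<Rightarrow> nat \<Rightarrow> nat set set" where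
  "edges_containing r V x = {e. e \<subseteq> V \<and> card e = r \<and> x \<in> e}"

lemma perfect_matchings_eq_UN_edges_containing:
  assumes "x \<in> V"
  shows "perfect_matchings r V
    = (\<Union>e\<in>edges_containing r V x. insert e ` perfect_matchings r (V - e))"
proof (intro equalityI subsetI)
  fix M assume M: "M \<in> perfect_matchings r V"
  then obtain e where e: "e \<in> M" "x \<in> e"
    using assms perfect_matchingsD(3) by blast
  have "M - {e} \<in> perfect_matchings r (V - e)"
    using perfect_matchings_Diff[OF M, of "{e}"] e by simp
  moreover have "M = insert e (M - {e})"
    using e by blast
  moreover have "e \<in> edges_containing r V x"
    using e perfect_matchingsD(1,2)[OF M e(1)] by (simp add: edges_containing_def)
  ultimately show "M \<in> (\<Union>e\<in>edges_containing r V x. insert e ` perfect_matchings r (V - e))"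
    by (intro UN_I image_eqI)
next
  fix M assume "M \<in> (\<Union>e\<in>edges_containing r V x. insert e ` perfect_matchings r (V - e))"
  then obtain e M' where e: "e \<subseteq> V" "card e = r" and M': "M' \<in> perfect_matchings r (V - e)"
    and "M = M' \<union> {e}"
    unfolding edges_containing_def by blast
  moreover have "(V - e) \<inter> e = {}" "(V - e) \<union> e = V"
    using e(1) by auto
  ultimately show "M \<in> perfect_matchings r V"
    using perfect_matchings_Un[OF M' singleton_perfect_matching[OF e(2)]] by simp
qed

lemma card_perfect_matchings_eq_sum:
  assumes "finite V" "x \<in> V"
  shows "card (perfect_matchings r V)
    = (\<Sum>e\<in>edges_containing r V x. card (perfect_matchings r (V - e)))"
proof -
  let ?E = "edges_containing r V x"
  have not_in: "e \<notin> M" if "e \<in> ?E" "M \<in> perfect_matchings r (V - e)" for e M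
    using that perfect_matchingsD(2)[of M r "V - e" e]
    unfolding edges_containing_def by blast
  have disjoint: "insert e ` perfect_matchings r (V - e) \<inter> insert e' ` perfect_matchings r (V - e') = {}"
    if "e \<in> ?E" "e' \<in> ?E" "e \<noteq> e'" for e e'
  proof (rule ccontr)
    assume "\<not> ?thesis"
    then obtain M M' where M': "M' \<in> perfect_matchings r (V - e')" and "insert e M = insert e' M'"
      by blast
    then have "e \<in> M'"
      using that(3) by blast
    then show False
      using perfect_matchingsD(2)[OF M'] that(1,2)
      unfolding edges_containing_def by blast
  qed
  have "card (perfect_matchings r V) = (\<Sum>e\<in>?E. card (insert e ` perfect_matchings r (V - e)))"
    unfolding perfect_matchings_eq_UN_edges_containing[OF assms(2)]
    using assms(1) disjoint
    by (intro card_UN_disjoint) (auto simp: edges_containing_def finite_perfect_matchings)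
  also have "\<dots> = (\<Sum>e\<in>?E. card (perfect_matchings r (V - e)))"
    using not_in by (intro sum.cong refl card_image) (meson inj_on_def insert_ident)
  finally show ?thesis .
qed

lemma card_edges_containing:
  assumes "finite V" "x \<in> V" "r > 0"
  shows "card (edges_containing r V x) = (card V - 1) choose (r - 1)"
proof -
  have "bij_betw (insert x) {B. B \<subseteq> V - {x} \<and> card B = r - 1} (edges_containing r V x)"
  proof (rule bij_betw_byWitness[where f' = "\<lambda>e. e - {x}"])
    show "insert x ` {B. B \<subseteq> V - {x} \<and> card B = r - 1} \<subseteq> (edges_containing r V x)"
      using assms by (auto simp: edges_containing_def card_insert_if finite_subset)
    show "(\<lambda>e. e - {x}) ` (edges_containing r V x) \<subseteq> {B. B \<subseteq> V - {x} \<and> card B = r - 1}"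
      using assms by (auto simp: edges_containing_def finite_subset)
  qed (auto simp: edges_containing_def)
  then have "card (edges_containing r V x) = card {B. B \<subseteq> V - {x} \<and> card B = r - 1}"
    by (simp add: bij_betw_same_card)
  also have "\<dots> = (card V - 1) choose (r - 1)"
    using assms by (simp add: n_subsets)
  finally show ?thesis .
qed

lemma card_perfect_matchings:
  assumes "r > 0" "finite V" "card V = r * j"
  shows "card (perfect_matchings r V) * fact r ^ j * fact j = (fact (r * j) :: nat)"
  using assms(2,3)
proof (induction j arbitrary: V)
  case 0
  then have "perfect_matchings r V = {{}}"
    using assms(1) by (auto simp: perfect_matchings_def partial_matchings_def)
  then show ?case
    by simp
next
  case (Suc j)
  then obtain x where x: "x \<in> V"
    using assms(1) by fastforce
  let ?E = "edges_containing r V x"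
  have "card (perfect_matchings r (V - e)) * fact r ^ j * fact j = fact (r * j)" if "e \<in> ?E" for e
    using that Suc
    by (intro Suc.IH) (auto simp: edges_containing_def card_Diff_subset finite_subset)
  then have IH: "card (perfect_matchings r V) * fact r ^ j * fact j = card ?E * fact (r * j)"
    unfolding card_perfect_matchings_eq_sum[OF Suc.prems(1) x] sum_distrib_right by simp
  have "card (perfect_matchings r V) * fact r ^ Suc j * fact (Suc j)
      = (card (perfect_matchings r V) * fact r ^ j * fact j) * (fact r * Suc j)"
    by (simp add: algebra_simps)
  also have "\<dots> = ((r * j + r - 1) choose (r - 1)) * fact (r * j) * (r * fact (r - 1) * Suc j)"
    using IH card_edges_containing[OF Suc.prems(1) x assms(1)] Suc.prems(2) assms(1)
    by (simp add: fact_reduce[of r] algebra_simps)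
  also have "\<dots> = (fact (r - 1) * fact (r * j) * ((r * j + r - 1) choose (r - 1))) * (r * j + r)"
    by (simp add: algebra_simps)
  also have "\<dots> = fact (r * j + r - 1) * (r * j + r)"
    using binomial_fact_lemma[of "r - 1" "r * j + r - 1"] assms(1) by (simp add: algebra_simps)
  also have "\<dots> = fact (r * Suc j)"
    using assms(1) fact_reduce[of "r * j + r", where 'a = nat] by (simp add: algebra_simps)
  finally show ?case .
qed

lemma card_perfect_matchings_real:
  assumes "r > 0" "finite V" "card V = r * j"
  shows "real (card (perfect_matchings r V)) = fact (r * j) / (fact r ^ j * fact j)"
proof -
  have "real (card (perfect_matchings r V)) * fact r ^ j * fact j = fact (r * j)"
    using arg_cong[OF card_perfect_matchings[OF assms], of real] by simp
  then show ?thesis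
    by (simp add: field_simps)
qed

lemma perfect_matching_of_Union: "N \<in> partial_matchings r W \<Longrightarrow> N \<in> perfect_matchings r (\<Union>N)"
  by (auto simp: perfect_matchings_def partial_matchings_def)

lemma card_perfect_matchings_containing:
  assumes "r > 0" "N \<in> partial_matchings r W"
  shows "card {M \<in> perfect_matchings r W. N \<subseteq> M} = card (perfect_matchings r (W - \<Union>N))"
proof -
  have N: "N \<in> perfect_matchings r (\<Union>N)" "\<Union>N \<subseteq> W"
    using assms(2) perfect_matching_of_Union by (auto simp: partial_matchings_def)
  have disj: "M \<inter> N = {}" if "M \<in> perfect_matchings r (W - \<Union>N)" for M
  proof -
    have "e = {}" if "e \<in> M" "e \<in> N" for e
      using perfect_matchingsD(2)[OF \<open>M \<in> _\<close> that(1)] that(2) by blast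
    then show ?thesis
      using perfect_matchingsD(1)[OF N(1)] assms(1) by fastforce
  qed
  have "bij_betw (\<lambda>M. M - N) {M \<in> perfect_matchings r W. N \<subseteq> M} (perfect_matchings r (W - \<Union>N))"
  proof (rule bij_betw_byWitness[where f' = "\<lambda>M. M \<union> N"])
    have "M \<union> N \<in> perfect_matchings r W" if "M \<in> perfect_matchings r (W - \<Union>N)" for M
    proof -
      have "(W - \<Union>N) \<inter> \<Union>N = {}" "(W - \<Union>N) \<union> \<Union>N = W"
        using N(2) by auto
      then show ?thesis
        using perfect_matchings_Un[OF that N(1)] by simp
    qed
    then show "(\<lambda>M. M \<union> N) ` perfect_matchings r (W - \<Union>N) \<subseteq> {M \<in> perfect_matchings r W. N \<subseteq> M}"
      by blast
  qed (use disj perfect_matchings_Diff in auto)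
  then show ?thesis
    by (rule bij_betw_same_card)
qed

lemma strict_mono_on_rank: "finite S \<Longrightarrow> strict_mono_on S (rank S)"
  unfolding rank_def by (intro strict_mono_onI psubset_card_mono) auto

lemma rank_image:
  assumes "finite S"
  shows "rank S ` S = {0..<card S}"
proof -
  have "rank S ` S \<subseteq> {0..<card S}"
    unfolding rank_def using assms by (auto intro!: psubset_card_mono)
  moreover have "card (rank S ` S) = card S"
    using strict_mono_on_imp_inj_on[OF strict_mono_on_rank[OF assms]] by (rule card_image)
  ultimately show ?thesis
    by (intro card_subset_eq) auto
qed

lemma rank_image_strict_mono_on:
  assumes h: "strict_mono_on S h" and "T \<subseteq> S" "x \<in> S"
  shows "rank (h ` T) (h x) = rank T x"
proof -
  have "{y \<in> h ` T. y < h x} = h ` {y \<in> T. y < x}"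
    using assms by (auto simp: strict_mono_on_less)
  moreover have "inj_on h {y \<in> T. y < x}"
    by (rule inj_on_subset[OF strict_mono_on_imp_inj_on[OF h]]) (use assms(2) in auto)
  ultimately show ?thesis
    unfolding rank_def by (simp add: card_image)
qed

lemma induced_pattern_image:
  assumes "strict_mono_on (e \<union> f) h"
  shows "induced_pattern (h ` e) (h ` f) = induced_pattern e f"
proof -
  have "rank (h ` (e \<union> f)) ` h ` X = rank (e \<union> f) ` X" if "X \<subseteq> e \<union> f" for X
    unfolding image_image using rank_image_strict_mono_on[OF assms order_refl] that
    by (intro image_cong) auto
  then show ?thesis
    unfolding induced_pattern_def image_Un[symmetric] by simp
qed

lemma is_clique_image:
  assumes "strict_mono_on (\<Union>N) h" "is_clique P N"
  shows "is_clique P ((`) h ` N)"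
  unfolding is_clique_def
proof (intro ballI impI)
  fix e' f' assume "e' \<in> (`) h ` N" "f' \<in> (`) h ` N" "e' \<noteq> f'"
  then obtain e f where ef: "e \<in> N" "f \<in> N" "e' = h ` e" "f' = h ` f" "e \<noteq> f"
    by blast
  have "strict_mono_on (e \<union> f) h"
    by (rule monotone_on_subset[OF assms(1)]) (use ef in auto)
  then show "induced_pattern e' f' \<in> P"
    using assms(2) ef by (simp add: induced_pattern_image is_clique_def)
qed

definition canonical_copy :: "nat set set \<Rightarrow> nat set set" where
  "canonical_copy N = (`) (rank (\<Union>N)) ` N"

lemma canonical_copy_inj:
  assumes "finite S" "\<Union>N1 = S" "\<Union>N2 = S" "canonical_copy N1 = canonical_copy N2"
  shows "N1 = N2"
proof -
  have "inj_on ((`) (rank S)) (Pow S)"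
    using inj_on_image_Pow strict_mono_on_imp_inj_on strict_mono_on_rank assms(1) by blast
  moreover have "N1 \<subseteq> Pow S" "N2 \<subseteq> Pow S"
    using assms(2,3) by auto
  ultimately show ?thesis
    using assms(2-4) unfolding canonical_copy_def by (metis inj_on_image_eq_iff)
qed

lemma ordered_matching_canonical_copy:
  assumes "finite W" "N \<in> partial_matchings r W"
  shows "ordered_matching r (card N) (canonical_copy N)"
proof -
  define S where "S = \<Union>N"
  have fin: "finite S"
    using assms by (auto simp: S_def partial_matchings_def intro: finite_subset)
  have sub: "e \<subseteq> S" if "e \<in> N" for e
    using that by (auto simp: S_def)
  have inj: "inj_on (rank S) S"
    using strict_mono_on_imp_inj_on strict_mono_on_rank fin by blast
  have injP: "inj_on ((`) (rank S)) N"
    using inj_on_image_Pow[OF inj] by (rule inj_on_subset) (auto simp: S_def)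
  have union: "\<Union>(canonical_copy N) = {0..<r * card N}"
    using rank_image[OF fin] card_Union_partial_matching[OF assms]
    by (simp add: canonical_copy_def S_def image_Union[symmetric])
  have edges: "card e' = r \<and> e' \<subseteq> {0..<r * card N}"
    if e': "e' \<in> canonical_copy N" for e'
  proof -
    obtain e where e: "e \<in> N" "e' = rank S ` e"
      using e' by (auto simp: canonical_copy_def S_def)
    have "card e' = card e"
      using card_image[OF inj_on_subset[OF inj sub[OF e(1)]]] e(2) by simp
    moreover have "card e = r"
      using assms(2) e(1) by (simp add: partial_matchings_def)
    moreover have "e' \<subseteq> {0..<r * card N}"
      using union e' by blast
    ultimately show ?thesis
      by simp
  qed
  have disjoint: "e' \<inter> f' = {}"
    if e'f': "e' \<in> canonical_copy N" "f' \<in> canonical_copy N" "e' \<noteq> f'" for e' f'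
  proof -
    obtain e f where ef: "e \<in> N" "f \<in> N" "e' = rank S ` e" "f' = rank S ` f"
      using e'f'(1,2) by (auto simp: canonical_copy_def S_def)
    then have "e \<noteq> f"
      using e'f'(3) by blast
    then have "e \<inter> f = {}"
      using assms(2) ef(1,2) unfolding partial_matchings_def by blast
    then show ?thesis
      using inj_on_image_Int[OF inj sub[OF ef(1)] sub[OF ef(2)]] ef(3,4) by simp
  qed
  have "card (canonical_copy N) = card N"
    using card_image[OF injP] by (simp add: canonical_copy_def S_def)
  moreover have "finite (canonical_copy N)"
    using finite_UnionD[of N] fin by (simp add: canonical_copy_def S_def)
  ultimately show ?thesis
    unfolding ordered_matching_def using union edges disjoint by simp
qed

lemma is_clique_canonical_copy:
  "finite (\<Union>N) \<Longrightarrow> is_clique P N \<Longrightarrow> is_clique P (canonical_copy N)"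
  unfolding canonical_copy_def by (rule is_clique_image[OF strict_mono_on_rank])

lemma the_edge_containing:
  assumes "ordered_matching r k M" "e \<in> M" "v \<in> e"
  shows "(THE e. e \<in> M \<and> v \<in> e) = e"
proof (rule the_equality)
  fix e' assume "e' \<in> M \<and> v \<in> e'"
  then show "e' = e"
    using assms unfolding ordered_matching_def by blast
qed (use assms in blast)

lemma trace_in_lists:
  assumes M: "ordered_matching r k M"
  shows "trace (r * k) M \<in> {xs. set xs \<subseteq> {1..r} \<and> length xs = r * k}"
proof -
  have "card {u \<in> (THE e. e \<in> M \<and> v \<in> e). u < v} < r" if "v < r * k" for v
  proof -
    have "v \<in> \<Union>M"
      using M that by (simp add: ordered_matching_def)
    then obtain e where e: "e \<in> M" "v \<in> e"
      by blast
    have "card e = r" "e \<subseteq> {0..<r * k}"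
      using M e(1) by (auto simp: ordered_matching_def)
    then have "card {u \<in> e. u < v} < r"
      using e(2) finite_subset[OF \<open>e \<subseteq> _\<close>] by (metis (mono_tags) psubset_card_mono
        finite_atLeastLessThan less_irrefl mem_Collect_eq psubsetI subsetI)
    then show ?thesis
      using the_edge_containing[OF M e] by simp
  qed
  then show ?thesis
    by (auto simp: trace_def Suc_le_eq)
qed

lemma card_cliques_le:
  assumes W: "finite W" and rec: "clique_family_reconstructible r P"
  shows "card {N \<in> partial_matchings r W. card N = k \<and> is_clique P N}
    \<le> (card W choose (r * k)) * r ^ (r * k)"
proof -
  let ?K = "{N \<in> partial_matchings r W. card N = k \<and> is_clique P N}"
  let ?B = "{S. S \<subseteq> W \<and> card S = r * k} \<times> {xs. set xs \<subseteq> {1..r} \<and> length xs = r * k}"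
  define \<Phi> where "\<Phi> N = (\<Union>N, trace (r * k) (canonical_copy N))" for N
  have K: "ordered_matching r k (canonical_copy N)" "is_clique P (canonical_copy N)"
    "finite (\<Union>N)" "\<Union>N \<subseteq> W" "card (\<Union>N) = r * k" if "N \<in> ?K" for N
  proof -
    show "ordered_matching r k (canonical_copy N)"
      using ordered_matching_canonical_copy[OF W] that by force
    show "\<Union>N \<subseteq> W"
      using that by (auto simp: partial_matchings_def)
    then show "finite (\<Union>N)"
      using W by (rule finite_subset)
    then show "is_clique P (canonical_copy N)"
      using that by (simp add: is_clique_canonical_copy)
    show "card (\<Union>N) = r * k"
      using card_Union_partial_matching[OF W] that by force
  qed
  have "\<Phi> ` ?K \<subseteq> ?B"
    using K(1,4,5) trace_in_lists by (force simp: \<Phi>_def)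
  moreover have "inj_on \<Phi> ?K"
  proof (rule inj_onI)
    fix N1 N2 assume N: "N1 \<in> ?K" "N2 \<in> ?K" "\<Phi> N1 = \<Phi> N2"
    then have "canonical_copy N1 = canonical_copy N2"
      using rec K(1,2)[OF N(1)] K(1,2)[OF N(2)]
      unfolding clique_family_reconstructible_def \<Phi>_def by blast
    then show "N1 = N2"
      using canonical_copy_inj K(3)[OF N(1)] N(3) by (auto simp: \<Phi>_def)
  qed
  moreover have "finite ?B"
    using W by (intro finite_cartesian_product finite_lists_length_eq) auto
  ultimately have "card ?K \<le> card ?B"
    by (intro card_inj_on_le)
  also have "card ?B = (card W choose (r * k)) * r ^ (r * k)"
    using W by (simp add: card_cartesian_product n_subsets card_lists_length_eq)
  finally show ?thesis .
qed

lemma exists_clique_of_card: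
  assumes "finite M" "k \<le> z P M"
  obtains N where "N \<subseteq> M" "is_clique P N" "card N = k"
proof -
  let ?Z = "{card N | N. N \<subseteq> M \<and> is_clique P N}"
  have "?Z \<subseteq> card ` Pow M"
    by blast
  then have "finite ?Z"
    by (rule finite_subset) (simp add: assms(1))
  moreover have "?Z \<noteq> {}"
    using is_clique_def[of P "{}"] by blast
  ultimately have "z P M \<in> ?Z"
    unfolding z_def by (rule Max_in)
  then obtain N0 where N0: "N0 \<subseteq> M" "is_clique P N0" "k \<le> card N0"
    using assms(2) by auto
  then obtain N where N: "N \<subseteq> N0" "card N = k"
    by (blast elim: obtain_subset_with_card_n)
  have "is_clique P N"
    using N0(2) N(1) unfolding is_clique_def by blast
  then show ?thesis
    using that[of N] N0(1) N by blast
qed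

lemma card_matchings_with_clique_le:
  assumes "r > 0" "k \<le> n"
  shows "real (card {M \<in> matchings r n. k \<le> z P M})
    \<le> real (card {N \<in> partial_matchings r {0..<r * n}. card N = k \<and> is_clique P N})
      * (fact (r * (n - k)) / (fact r ^ (n - k) * fact (n - k)))"
proof -
  let ?W = "{0..<r * n}"
  let ?K = "{N \<in> partial_matchings r ?W. card N = k \<and> is_clique P N}"
  have "{M \<in> matchings r n. k \<le> z P M} \<subseteq> (\<Union>N\<in>?K. {M \<in> perfect_matchings r ?W. N \<subseteq> M})"
  proof
    fix M assume M': "M \<in> {M \<in> matchings r n. k \<le> z P M}"
    then have M: "M \<in> perfect_matchings r ?W" "k \<le> z P M"
      using matchings_eq_perfect_matchings[OF assms(1)] by auto
    moreover have "finite M"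
      using M' by (simp add: matchings_def ordered_matching_def)
    ultimately obtain N where "N \<subseteq> M" "is_clique P N" "card N = k"
      by (blast elim: exists_clique_of_card)
    moreover have "N \<in> partial_matchings r ?W"
      using M(1) \<open>N \<subseteq> M\<close> by (auto simp: perfect_matchings_def intro: partial_matchings_mono)
    ultimately show "M \<in> (\<Union>N\<in>?K. {M \<in> perfect_matchings r ?W. N \<subseteq> M})"
      using M(1) by blast
  qed
  then have "card {M \<in> matchings r n. k \<le> z P M}
      \<le> card (\<Union>N\<in>?K. {M \<in> perfect_matchings r ?W. N \<subseteq> M})"
    by (rule card_mono[rotated])
      (rule finite_subset[of _ "perfect_matchings r ?W"], auto simp: finite_perfect_matchings)
  also have "\<dots> \<le> (\<Sum>N\<in>?K. card {M \<in> perfect_matchings r ?W. N \<subseteq> M})"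
    by (rule card_UN_le) (simp add: finite_partial_matchings)
  also have "\<dots> = (\<Sum>N\<in>?K. card (perfect_matchings r (?W - \<Union>N)))"
    using card_perfect_matchings_containing[OF assms(1)] by simp
  finally have "real (card {M \<in> matchings r n. k \<le> z P M})
      \<le> (\<Sum>N\<in>?K. real (card (perfect_matchings r (?W - \<Union>N))))"
    by (simp only: of_nat_le_iff of_nat_sum[symmetric])
  also have "\<dots> = (\<Sum>N\<in>?K. fact (r * (n - k)) / (fact r ^ (n - k) * fact (n - k)))"
  proof (rule sum.cong[OF refl])
    fix N assume N: "N \<in> ?K"
    have "\<Union>N \<subseteq> ?W"
      using N by (auto simp: partial_matchings_def)
    then have "card (?W - \<Union>N) = r * n - r * k"
      using card_Union_partial_matching[of ?W N r] N by (simp add: card_Diff_subset finite_subset)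
    then have "card (?W - \<Union>N) = r * (n - k)"
      by (simp add: diff_mult_distrib2)
    then show "real (card (perfect_matchings r (?W - \<Union>N)))
        = fact (r * (n - k)) / (fact r ^ (n - k) * fact (n - k))"
      using card_perfect_matchings_real[OF assms(1)] by simp
  qed
  finally show ?thesis
    by (simp add: mult.commute)
qed

lemma card_matchings_real:
  assumes "r > 0"
  shows "real (card (matchings r n)) = fact (r * n) / (fact r ^ n * fact n)"
  using card_perfect_matchings_real[OF assms, of "{0..<r * n}" n]
  by (simp add: matchings_eq_perfect_matchings[OF assms])

lemma finite_matchings: "finite (matchings r n)"
  by (rule finite_subset[of _ "Pow (Pow {0..<r * n})"]) (auto simp: matchings_def ordered_matching_def)

lemma prob_RM_le_one: "prob_RM r n Q \<le> 1"
  unfolding prob_RM_def divide_le_eq_1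
  using card_mono[OF finite_matchings, of "{M \<in> matchings r n. Q M}"] by force

lemma prob_RM_not:
  assumes "r > 0"
  shows "prob_RM r n (\<lambda>M. \<not> Q M) = 1 - prob_RM r n Q"
proof -
  have fin: "finite (matchings r n)"
    by (rule finite_matchings)
  have "real (card (matchings r n)) > 0"
    by (simp add: card_matchings_real[OF assms])
  moreover have "{M \<in> matchings r n. \<not> Q M} = matchings r n - {M \<in> matchings r n. Q M}"
    by blast
  then have "card {M \<in> matchings r n. \<not> Q M} = card (matchings r n) - card {M \<in> matchings r n. Q M}"
    using fin by (simp add: card_Diff_subset)
  moreover have "card {M \<in> matchings r n. Q M} \<le> card (matchings r n)"
    using fin by (intro card_mono) auto
  ultimately show ?thesis
    unfolding prob_RM_def by (simp add: field_simps)
qed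

lemma prob_large_clique_le:
  assumes r: "r > 0" and rec: "clique_family_reconstructible r P" and "k \<le> n"
  shows "prob_RM r n (\<lambda>M. k \<le> z P M) \<le> real r ^ (r * k) * fact r ^ k * real n ^ k / fact (r * k)"
proof -
  have rk: "r * k \<le> r * n" "r * n - r * k = r * (n - k)"
    using assms(3) by (simp_all add: diff_mult_distrib2)
  let ?K = "{N \<in> partial_matchings r {0..<r * n}. card N = k \<and> is_clique P N}"
  let ?F = "fact (r * (n - k)) / (fact r ^ (n - k) * fact (n - k)) :: real"
  have "real (card {M \<in> matchings r n. k \<le> z P M}) \<le> real (card ?K) * ?F"
    by (rule card_matchings_with_clique_le[OF r assms(3)])
  also have "\<dots> \<le> real ((r * n choose (r * k)) * r ^ (r * k)) * ?F"
    using of_nat_mono[OF card_cliques_le[OF _ rec, of "{0..<r * n}" k], where 'a = real]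
    by (intro mult_right_mono) simp_all
  finally have "real (card {M \<in> matchings r n. k \<le> z P M})
      \<le> real ((r * n choose (r * k)) * r ^ (r * k)) * ?F" .
  then have "prob_RM r n (\<lambda>M. k \<le> z P M)
      \<le> real ((r * n choose (r * k)) * r ^ (r * k))
        * ?F / (fact (r * n) / (fact r ^ n * fact n))"
    unfolding prob_RM_def card_matchings_real[OF r] by (rule divide_right_mono) simp
  also have "\<dots> = real r ^ (r * k) * fact r ^ k * (fact k * real (n choose k)) / fact (r * k)"
    using assms(3) rk
    by (simp add: binomial_fact fact_binomial power_add[symmetric] field_simps)
  also have "\<dots> \<le> real r ^ (r * k) * fact r ^ k * real n ^ k / fact (r * k)"
  proof -
    have "fact k * real (n choose k) \<le> real n ^ k"
      using of_nat_mono[OF binomial_fact_pow[of n k], where 'a = real] by (simp add: mult.commute)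
    then show ?thesis
      by (intro divide_right_mono mult_left_mono) simp_all
  qed
  finally show ?thesis .
qed

lemma pow_le_exp_mult_fact: "real m ^ m \<le> exp (real m) * fact m"
proof -
  have "(\<lambda>i. real m ^ i / fact i) sums exp (real m)"
    using exp_converges[of "real m"] by (simp add: divide_inverse mult.commute)
  then have "real m ^ m / fact m \<le> exp (real m)"
    using sum_le_suminf[of "\<lambda>i. real m ^ i / fact i" "{m}"] by (simp add: sums_iff)
  then show ?thesis
    by (simp add: divide_le_eq)
qed

lemma prob_large_clique_le_power:
  assumes r: "r > 0" and rec: "clique_family_reconstructible r P" and "0 < k" "k \<le> n"
  shows "prob_RM r n (\<lambda>M. k \<le> z P M) \<le> (fact r * exp (real r) * real n / real k ^ r) ^ k"
proof -
  have "1 / fact (r * k) \<le> exp (real (r * k)) / real (r * k) ^ (r * k)"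
    using pow_le_exp_mult_fact[of "r * k"] r assms(3) by (simp add: field_simps)
  then have "prob_RM r n (\<lambda>M. k \<le> z P M)
      \<le> real r ^ (r * k) * fact r ^ k * real n ^ k * (exp (real (r * k)) / real (r * k) ^ (r * k))"
    using prob_large_clique_le[OF r rec assms(4)] by (simp add: divide_inverse mult_left_mono order_trans)
  also have "\<dots> = (fact r * exp (real r) * real n / real k ^ r) ^ k"
    using r assms(3)
    by (simp add: exp_of_nat_mult[symmetric] power_mult[symmetric] field_simps)
  finally show ?thesis .
qed

lemma prob_large_clique_le_half_power:
  assumes r: "r > 0" and rec: "clique_family_reconstructible r P"
    and k: "0 < k" "2 * fact r * exp (real r) * real n \<le> real k ^ r"
  shows "prob_RM r n (\<lambda>M. k \<le> z P M) \<le> (1 / 2) ^ k"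
proof (cases "k \<le> n")
  case True
  have "fact r * exp (real r) * real n / real k ^ r \<le> 1 / 2"
    using k by (simp add: field_simps)
  then have "(fact r * exp (real r) * real n / real k ^ r) ^ k \<le> (1 / 2) ^ k"
    by (intro power_mono) simp_all
  then show ?thesis
    using prob_large_clique_le_power[OF r rec k(1) True] by linarith
next
  case False
  have "\<not> k \<le> z P M" if "M \<in> matchings r n" for M
  proof
    assume "k \<le> z P M"
    moreover have "finite M" "card M = n"
      using that by (simp_all add: matchings_def ordered_matching_def)
    ultimately obtain N where "N \<subseteq> M" "card N = k"
      by (blast elim: exists_clique_of_card)
    then show False
      using False \<open>finite M\<close> \<open>card M = n\<close> card_mono by fastforce
  qed
  then have empty: "{M \<in> matchings r n. k \<le> z P M} = {}"
    by blast
  show ?thesis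
    unfolding prob_RM_def empty by simp
qed

lemma prob_clique_number_le_ge:
  assumes r: "r > 0" and rec: "clique_family_reconstructible r P" and "n \<ge> 1"
    and C: "C = 2 * fact r * exp (real r)"
  shows "1 - real n powr (- 1 / real r) / C
    \<le> prob_RM r n (\<lambda>M. real (z P M) \<le> C * real n powr (1 / real r))"
proof -
  define x where "x = C * real n powr (1 / real r)"
  define k where "k = nat \<lfloor>x\<rfloor> + 1"
  have "(1 :: real) \<le> fact r * exp (real r)"
    by (rule order_trans[OF fact_ge_1[of r]]) simp
  then have "C \<ge> 1"
    using C by simp
  then have "x > 0"
    using assms(3) by (simp add: x_def)
  moreover have "real k = of_int \<lfloor>x\<rfloor> + 1"
    using \<open>x > 0\<close> by (simp add: k_def)
  ultimately have x: "x > 0" "real k > x"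
    using real_of_int_floor_add_one_gt[of x] by linarith+
  have "x ^ r = C ^ r * real n"
    using assms(3) r by (simp add: x_def power_mult_distrib powr_power)
  also have "\<dots> \<ge> C * real n"
    using \<open>C \<ge> 1\<close> r by (intro mult_right_mono) (auto simp: power_increasing[of 1 r C, simplified])
  also have "x ^ r \<le> real k ^ r"
    using x by (intro power_mono) auto
  finally have "2 * fact r * exp (real r) * real n \<le> real k ^ r"
    using C by simp
  then have "prob_RM r n (\<lambda>M. k \<le> z P M) \<le> (1 / 2) ^ k"
    by (rule prob_large_clique_le_half_power[OF r rec, rotated]) (simp add: k_def)
  also have "\<dots> \<le> 1 / real k"
    unfolding power_one_over using of_nat_less_two_power[of k, where 'a = real] x
    by (intro frac_le) auto
  also have "\<dots> \<le> 1 / x"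
    using x by (simp add: frac_le)
  also have "\<dots> = real n powr (- 1 / real r) / C"
    using assms(3) by (simp add: x_def powr_minus_divide)
  finally have "prob_RM r n (\<lambda>M. k \<le> z P M) \<le> real n powr (- 1 / real r) / C" .
  moreover have "(real (z P M) \<le> x) \<longleftrightarrow> \<not> k \<le> z P M" for M
  proof -
    have "(real (z P M) \<le> x) \<longleftrightarrow> int (z P M) \<le> \<lfloor>x\<rfloor>"
      by (simp add: le_floor_iff)
    also have "\<dots> \<longleftrightarrow> \<not> k \<le> z P M"
      using \<open>x > 0\<close> unfolding k_def by linarith
    finally show ?thesis .
  qed
  then have "prob_RM r n (\<lambda>M. real (z P M) \<le> x) = 1 - prob_RM r n (\<lambda>M. k \<le> z P M)"
    using prob_RM_not[OF r, where Q = "\<lambda>M. k \<le> z P M" and n = n] by simp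
  ultimately show ?thesis
    unfolding x_def by simp
qed

theorem mainTheorem7:
  fixes r :: nat and P :: "nat set set set"
  assumes "r \<ge> 2"
    and "P \<subseteq> patterns r"
    and "clique_family_reconstructible r P"
  shows "\<exists>C::real. C > 0 \<and>
    (\<lambda>n. prob_RM r n (\<lambda>M. real (z P M) \<le> C * real n powr (1 / real r)))
      \<longlonglongrightarrow> 1"
proof -
  have r: "r > 0"
    using assms(1) by simp
  define C where "C = 2 * fact r * exp (real r)"
  define p where "p n = prob_RM r n (\<lambda>M. real (z P M) \<le> C * real n powr (1 / real r))" for n
  have C: "C > 0"
    by (simp add: C_def)
  have "(\<lambda>n. 1 - real n powr (- 1 / real r) / C) \<longlonglongrightarrow> 1 - 0 / C"
    using r C by (intro tendsto_intros tendsto_neg_powr filterlim_real_sequentially) auto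
  then have lower: "(\<lambda>n. 1 - real n powr (- 1 / real r) / C) \<longlonglongrightarrow> 1"
    by simp
  have "\<forall>\<^sub>F n in sequentially. 1 - real n powr (- 1 / real r) / C \<le> p n"
    unfolding p_def using prob_clique_number_le_ge[OF r assms(3) _ C_def]
    by (rule eventually_sequentiallyI)
  moreover have "\<forall>\<^sub>F n in sequentially. p n \<le> 1"
    unfolding p_def by (simp add: prob_RM_le_one)
  ultimately have "p \<longlonglongrightarrow> 1"
    using lower by (rule tendsto_sandwich) (rule tendsto_const)
  then show ?thesis
    using C unfolding p_def by blast
qed

end
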